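(* For every positive integer $n$, $$b^{2}_{8,5}(4n+1)\equiv 2\,b^{2}_{2,5}(n)\pmod{10}.$$
   Context: For integers $r\ge1$ write $f_r=\prod_{i\ge1}(1-q^{ri})$. For coprime positive integers $\ell,m$ and a positive integer $k$, $b^{k}_{\ell,m}(n)$ denotes the number of $k$-colored partitions of $n$ into parts not divisible by $\ell$ or by $m$, i.e. $\sum_{n\ge0} b^{k}_{\ell,m}(n)q^n=\dfrac{f_\ell^k f_m^k}{f_1^k f_{\ell m}^k}$. Thus $\sum b^2_{8,5}(n)q^n=\dfrac{f_8^2f_5^2}{f_1^2f_{40}^2}$ and $\sum b^2_{2,5}(n)q^n=\dfrac{f_2^2f_5^2}{f_1^2f_{10}^2}$. *)

theory Defs
  imports "HOL-Computational_Algebra.Formal_Power_Series" "HOL-Number_Theory.Cong"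
begin

(* f_r = prod_{i>=1} (1 - q^{r i}) as an integer formal power series.
   The n-th coefficient of the infinite product equals that of the finite
   product over 1 <= i <= n (factors with i > n only affect degrees > n, r >= 1). *)
definition eta_f :: "nat \<Rightarrow> int fps" where
  "eta_f r = Abs_fps (\<lambda>n. fps_nth (\<Prod>i\<in>{1..n}. (1 - fps_X ^ (r * i) :: int fps)) n)"

definition b_gen :: "nat \<Rightarrow> nat \<Rightarrow> nat \<Rightarrow> int fps" where
  "b_gen k l m = eta_f l ^ k * eta_f m ^ k *
     fps_right_inverse (eta_f 1 ^ k * eta_f (l * m) ^ k) 1"

definition b :: "nat \<Rightarrow> nat \<Rightarrow> nat \<Rightarrow> nat \<Rightarrow> int" where
  "b k l m n = fps_nth (b_gen k l m) n"

end

(*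
  Write f_r for prod_i (1 - q^(r i)).  Since (1 - x)^5 == 1 - x^5 (mod 5), we have
  f_r^5 == f_(5r), so the generating function f_l^2 f_5^2 / (f_1^2 f_(5l)^2) of b^2_(l,5) is
  congruent to f_1^8 / f_l^8 modulo 5.  Jacobi's identity phi(q)^4 - phi(-q)^4 = 16 q psi(q^2)^4,
  rewritten through Gauss's product formulas phi(-q) = f_1^2 / f_2 and psi(q) = f_2^2 / f_1,
  becomes f_1(-q)^8 - f_1(q)^8 = 16 q f_4^8.  Comparing coefficients of q^(4n+1) shows that this
  coefficient of f_1^8 is -8 times the coefficient of q^n, and therefore the coefficient of
  q^(4n+1) in f_1^8 / f_8^8 is -8, i.e. 2 modulo 5, times the coefficient of q^n in f_1^8 / f_2^8.
  Modulo 2 it suffices that the generating function of b^2_(8,5) is a square, whose odd-indexed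
  coefficients are even.

  Gauss's formulas come from the q-binomial theorem applied to finite products, letting the
  truncation tend to infinity; the other theta function identities follow from them by ring
  algebra and the substitutions q -> -q and q -> q^k.
*)
theory Submission
  imports Defs
begin

unbundle fps_syntax

lemma (in comm_monoid_set) lessThan_add_split:
  "F g {..<a + r :: nat} = F g {..<a} \<^bold>* F (\<lambda>i. g (a + i)) {..<r}"
  by (induction r) (simp_all add: ac_simps)

lemma fps_cutoff_mult:
  "fps_cutoff n (f * g) = fps_cutoff n (fps_cutoff n f * fps_cutoff n (g :: 'a::comm_ring_1 fps))"
  by (simp add: fps_eq_iff fps_cutoff_left_mult_nth fps_cutoff_right_mult_nth)

lemma fps_cutoff_mult_cong:
  fixes f g :: "'a::comm_ring_1 fps"
  assumes "fps_cutoff n f = fps_cutoff n f'" "fps_cutoff n g = fps_cutoff n g'"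
  shows "fps_cutoff n (f * g) = fps_cutoff n (f' * g')"
  by (metis assms fps_cutoff_mult)

lemma fps_cutoff_power_cong:
  fixes f g :: "'a::comm_ring_1 fps"
  shows "fps_cutoff n f = fps_cutoff n g \<Longrightarrow> fps_cutoff n (f ^ k) = fps_cutoff n (g ^ k)"
  by (induction k) (auto intro: fps_cutoff_mult_cong)

lemma fps_cutoff_sum_cong:
  fixes f g :: "'i \<Rightarrow> 'a::comm_ring_1 fps"
  shows "(\<And>i. i \<in> I \<Longrightarrow> fps_cutoff n (f i) = fps_cutoff n (g i)) \<Longrightarrow>
    fps_cutoff n (sum f I) = fps_cutoff n (sum g I)"
  by (induction I rule: infinite_finite_induct) (auto simp: fps_cutoff_add)

lemma fps_cutoff_compose_cong:
  fixes f g :: "'a::comm_ring_1 fps"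
  assumes "fps_cutoff n f = fps_cutoff n g"
  shows "fps_cutoff n (f oo h) = fps_cutoff n (g oo h)"
proof -
  have "f $ i = g $ i" if "i < n" for i
    using assms that by (simp add: fps_cutoff_eq_fps_cutoff_iff)
  then show ?thesis
    by (auto simp: fps_cutoff_eq_fps_cutoff_iff fps_compose_nth intro!: sum.cong)
qed

lemma fps_nth_eq_if_cutoff_Suc_eq: "fps_cutoff (Suc n) f = fps_cutoff (Suc n) g \<Longrightarrow> f $ n = g $ n"
  by (metis fps_cutoff_nth lessI)

lemma fps_eq_if_cutoffs_eq: "(\<And>n. fps_cutoff n f = fps_cutoff n g) \<Longrightarrow> f = g"
  by (metis fps_cutoff_eq_fps_cutoff_iff fps_ext lessI)

lemma fps_cutoff_X_power_mult: "n \<le> m \<Longrightarrow> fps_cutoff n (fps_X ^ m * f) = 0"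
  by (simp add: fps_eq_iff fps_X_power_mult_nth)

lemma fps_cutoff_mult_cancel_left:
  fixes f g h :: "'a::comm_ring_1 fps"
  assumes "fps_cutoff n (h * f) = fps_cutoff n (h * g)" "h $ 0 = 1"
  shows "fps_cutoff n f = fps_cutoff n g"
proof -
  define u where "u = fps_right_inverse h 1"
  have "h * u = 1"
    unfolding u_def by (rule fps_right_inverse) (simp add: assms(2))
  then have "f = u * (h * f)" "g = u * (h * g)"
    by (simp_all add: mult.assoc[symmetric] mult.commute[of u])
  then show ?thesis
    using fps_cutoff_mult_cong[OF refl assms(1), of u] by metis
qed

lemma fps_const_neg_one_power: "(-1 :: 'a::comm_ring_1 fps) ^ j = fps_const ((-1) ^ j)"
  by (simp flip: fps_const_neg fps_const_power)

lemmas fps_compose_ring_simps =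
  fps_compose_mult_distrib fps_compose_power[symmetric] fps_compose_sub_distrib fps_compose_add_distrib

lemma fps_compose_X_power_nth:
  assumes "0 < k"
  shows "(f oo fps_X ^ k) $ n = (if k dvd n then f $ (n div k) else 0)"
proof -
  have "(f oo fps_X ^ k) $ n = (\<Sum>i=0..n. if n = k * i then f $ i else 0)"
    by (auto simp: fps_compose_nth simp flip: power_mult intro!: sum.cong)
  also have "\<dots> = (if k dvd n then f $ (n div k) else 0)"
  proof (cases "k dvd n")
    case True
    then have "(\<Sum>i=0..n. if n = k * i then f $ i else 0) = (\<Sum>i=0..n. if i = n div k then f $ i else 0)"
      using assms by (intro sum.cong) auto
    then show ?thesis
      using True by (simp add: div_le_dividend)
  qed (auto intro!: sum.neutral)
  finally show ?thesis .
qed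

lemma fps_compose_X_power_compose:
  fixes f h :: "'a::idom fps"
  assumes "0 < j" "h $ 0 = 0"
  shows "(f oo fps_X ^ j) oo h = f oo h ^ j"
  using assms by (simp add: fps_compose_assoc[symmetric] fps_X_power_compose)

lemma fps_compose_uminus_X_twice:
  fixes f :: "'a::idom fps"
  shows "(f oo - fps_X) oo - fps_X = f"
  by (simp add: fps_compose_assoc[symmetric] fps_compose_uminus)

lemma fps_compose_even_X_power_uminus_X:
  fixes f :: "'a::idom fps"
  shows "0 < j \<Longrightarrow> even j \<Longrightarrow> (f oo fps_X ^ j) oo - fps_X = f oo fps_X ^ j"
  by (simp add: fps_compose_X_power_compose)

lemma fps_mult_compose_X_power_nth:
  fixes f g :: "'a::comm_ring_1 fps"
  assumes "0 < k"
  shows "(g * (f oo fps_X ^ k)) $ m = (\<Sum>j\<le>m div k. g $ (m - k * j) * f $ j)"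
proof -
  have "(g * (f oo fps_X ^ k)) $ m = (\<Sum>i=0..m. (f oo fps_X ^ k) $ i * g $ (m - i))"
    by (simp add: mult.commute[of g] fps_mult_nth)
  also have "\<dots> = (\<Sum>i\<in>(\<lambda>j. k * j) ` {..m div k}. (f oo fps_X ^ k) $ i * g $ (m - i))"
  proof (rule sum.mono_neutral_right)
    show "(\<lambda>j. k * j) ` {..m div k} \<subseteq> {0..m}"
      using assms by (auto simp: less_eq_div_iff_mult_less_eq mult.commute)
    show "\<forall>i\<in>{0..m} - (\<lambda>j. k * j) ` {..m div k}. (f oo fps_X ^ k) $ i * g $ (m - i) = 0"
      using assms
      by (auto simp: fps_compose_X_power_nth less_eq_div_iff_mult_less_eq mult.commute elim!: dvdE)
  qed simp
  also have "\<dots> = (\<Sum>j\<le>m div k. g $ (m - k * j) * f $ j)"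
    using assms by (subst sum.reindex) (auto simp: inj_on_def fps_compose_X_power_nth ac_simps)
  finally show ?thesis .
qed

section \<open>q-Pochhammer symbols and the Euler products\<close>

definition qpoch :: "'a::comm_ring_1 \<Rightarrow> nat \<Rightarrow> 'a" where
  "qpoch Q m = (\<Prod>i=1..m. 1 - Q ^ i)"

definition qpoch_odd :: "'a::comm_ring_1 \<Rightarrow> nat \<Rightarrow> 'a" where
  "qpoch_odd Q K = (\<Prod>i<K. 1 - Q ^ Suc (2 * i))"

definition qpoch_neg :: "'a::comm_ring_1 \<Rightarrow> nat \<Rightarrow> 'a" where
  "qpoch_neg Q K = (\<Prod>i<K. 1 + Q ^ Suc i)"

lemma qpoch_0 [simp]: "qpoch Q 0 = 1"
  by (simp add: qpoch_def)

lemma qpoch_Suc: "qpoch Q (Suc m) = qpoch Q m * (1 - Q ^ Suc m)"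
  by (simp add: qpoch_def prod.nat_ivl_Suc' mult.commute)

lemma qpoch_compose:
  fixes Q h :: "'a::idom fps"
  assumes "h $ 0 = 0"
  shows "qpoch Q m oo h = qpoch (Q oo h) m"
  using assms by (induction m) (simp_all add: qpoch_Suc fps_compose_mult_distrib
      fps_compose_sub_distrib fps_compose_power)

lemma qpoch_cutoff_stable:
  fixes Q :: "'a::comm_ring_1 fps"
  assumes "Q $ 0 = 0" "m \<le> m'"
  shows "fps_cutoff (Suc m) (qpoch Q m') = fps_cutoff (Suc m) (qpoch Q m)"
  using assms(2)
proof (induction m' rule: dec_induct)
  case (step k)
  have "fps_cutoff (Suc m) (1 - Q ^ Suc k) = fps_cutoff (Suc m) 1"
    using startsby_zero_power_prefix[OF assms(1), of "Suc k"] step.hyps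
    by (auto simp: fps_cutoff_eq_fps_cutoff_iff)
  then show ?case
    using fps_cutoff_mult_cong[OF step.IH] by (simp add: qpoch_Suc)
qed simp

lemma qpoch_uminus_mult:
  fixes Q :: "'a::comm_ring_1"
  shows "qpoch (- Q) (2 * N) * qpoch Q (2 * N) * qpoch (Q ^ 4) N
    = qpoch (Q ^ 2) N ^ 2 * qpoch (Q ^ 2) (2 * N)"
proof (induction N)
  case (Suc N)
  define u where "u = Q ^ Suc (2 * N)"
  define v where "v = Q ^ Suc (Suc (2 * N))"
  have two: "2 * Suc N = Suc (Suc (2 * N))"
    by simp
  have "(- Q) ^ Suc (2 * N) = - u" "(- Q) ^ Suc (Suc (2 * N)) = v"
    by (simp_all add: u_def v_def)
  moreover have "(Q ^ 4) ^ Suc N = v * v" "(Q ^ 2) ^ Suc (Suc (2 * N)) = v * v"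
    "(Q ^ 2) ^ Suc (2 * N) = u * u" "(Q ^ 2) ^ Suc N = v"
    unfolding u_def v_def power_add[symmetric] power_mult[symmetric]
    by (rule arg_cong[where f = "power Q"], simp)+
  ultimately have "qpoch (- Q) (2 * Suc N) = qpoch (- Q) (2 * N) * (1 + u) * (1 - v)"
    "qpoch Q (2 * Suc N) = qpoch Q (2 * N) * (1 - u) * (1 - v)"
    "qpoch (Q ^ 4) (Suc N) = qpoch (Q ^ 4) N * (1 - v * v)"
    "qpoch (Q ^ 2) (Suc N) = qpoch (Q ^ 2) N * (1 - v)"
    "qpoch (Q ^ 2) (2 * Suc N) = qpoch (Q ^ 2) (2 * N) * (1 - u * u) * (1 - v * v)"
    by (simp_all only: two qpoch_Suc u_def v_def diff_minus_eq_add)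
  then have "qpoch (- Q) (2 * Suc N) * qpoch Q (2 * Suc N) * qpoch (Q ^ 4) (Suc N)
      = qpoch (- Q) (2 * N) * qpoch Q (2 * N) * qpoch (Q ^ 4) N * ((1 + u) * (1 - u) * (1 - v) ^ 2 * (1 - v * v))"
    "qpoch (Q ^ 2) (Suc N) ^ 2 * qpoch (Q ^ 2) (2 * Suc N)
      = qpoch (Q ^ 2) N ^ 2 * qpoch (Q ^ 2) (2 * N) * ((1 - u * u) * (1 - v) ^ 2 * (1 - v * v))"
    by (simp_all only: power2_eq_square mult_ac)
  moreover have "(1 + u) * (1 - u) = 1 - u * u"
    by (simp add: algebra_simps)
  ultimately show ?case
    using Suc.IH by simp
qed simp

lemma qpoch_odd_mult:
  fixes Q :: "'a::comm_ring_1"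
  shows "qpoch_odd Q K * qpoch (Q ^ 2) K = qpoch Q (2 * K)"
  unfolding qpoch_odd_def
proof (induction K)
  case (Suc K)
  have "(Q ^ 2) ^ Suc K = Q ^ Suc (Suc (2 * K))"
    by (simp only: power_mult[symmetric]) simp
  then have step: "qpoch Q (2 * Suc K) = qpoch Q (2 * K) * (1 - Q ^ Suc (2 * K)) * (1 - (Q ^ 2) ^ Suc K)"
    by (simp only: qpoch_Suc mult_2 add_Suc_right add_Suc)
  have "(\<Prod>i<Suc K. 1 - Q ^ Suc (2 * i)) * qpoch (Q ^ 2) (Suc K)
      = ((\<Prod>i<K. 1 - Q ^ Suc (2 * i)) * qpoch (Q ^ 2) K) * ((1 - Q ^ Suc (2 * K)) * (1 - (Q ^ 2) ^ Suc K))"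
    by (simp only: prod.lessThan_Suc qpoch_Suc mult_ac)
  also have "\<dots> = qpoch Q (2 * Suc K)"
    by (simp only: Suc.IH step mult.assoc)
  finally show ?case .
qed simp

lemma qpoch_neg_mult:
  fixes Q :: "'a::comm_ring_1"
  shows "qpoch_neg Q K * qpoch Q K = qpoch (Q ^ 2) K"
  unfolding qpoch_neg_def
proof (induction K)
  case (Suc K)
  have "(1 + Q ^ Suc K) * (1 - Q ^ Suc K) = 1 - (Q ^ 2) ^ Suc K"
    by (simp add: algebra_simps power2_eq_square flip: power_mult_distrib)
  then show ?case
    using Suc.IH by (simp only: prod.lessThan_Suc qpoch_Suc) (metis mult.assoc mult.left_commute)
qed simp

lemma eta_f_nth: "eta_f r $ n = qpoch (fps_X ^ r) n $ n"
  by (simp add: eta_f_def qpoch_def power_mult)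

lemma eta_f_cutoff:
  assumes "0 < r" "n \<le> Suc m"
  shows "fps_cutoff n (eta_f r) = fps_cutoff n (qpoch (fps_X ^ r) m)"
proof -
  have "eta_f r $ i = qpoch (fps_X ^ r) m $ i" if "i < n" for i
  proof -
    have "qpoch (fps_X ^ r :: int fps) m $ i = qpoch (fps_X ^ r) i $ i"
      using assms that by (intro fps_nth_eq_if_cutoff_Suc_eq qpoch_cutoff_stable) auto
    then show ?thesis
      by (simp add: eta_f_nth)
  qed
  then show ?thesis
    by (simp add: fps_cutoff_eq_fps_cutoff_iff)
qed

lemma eta_f_compose_cutoff:
  assumes "0 < r" "h $ 0 = 0" "n \<le> Suc m"
  shows "fps_cutoff n (eta_f r oo h) = fps_cutoff n (qpoch (h ^ r) m)"
proof -
  have "fps_cutoff n (eta_f r oo h) = fps_cutoff n (qpoch (fps_X ^ r) m oo h)"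
    using assms by (intro fps_cutoff_compose_cong eta_f_cutoff)
  also have "qpoch (fps_X ^ r) m oo h = qpoch (h ^ r) m"
    using assms by (simp add: qpoch_compose fps_X_power_compose)
  finally show ?thesis .
qed

lemma eta_f_nth_0: "0 < r \<Longrightarrow> eta_f r $ 0 = 1"
  by (simp add: eta_f_nth)

lemma eta_f_nonzero: "0 < r \<Longrightarrow> eta_f r \<noteq> 0"
  by (metis eta_f_nth_0 fps_zero_nth zero_neq_one)

lemma eta_f_compose_X_power:
  assumes "0 < r" "0 < k"
  shows "eta_f r oo fps_X ^ k = eta_f (k * r)"
proof (rule fps_eq_if_cutoffs_eq)
  fix n
  have "fps_cutoff n (eta_f r oo fps_X ^ k) = fps_cutoff n (qpoch ((fps_X ^ k) ^ r) n)"
    using assms by (intro eta_f_compose_cutoff) auto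
  also have "\<dots> = fps_cutoff n (eta_f (k * r))"
    using assms by (subst eta_f_cutoff[where m = n]) (auto simp: power_mult)
  finally show "fps_cutoff n (eta_f r oo fps_X ^ k) = fps_cutoff n (eta_f (k * r))" .
qed

lemma eta_f_compose_uminus_X:
  assumes "0 < r" "even r"
  shows "eta_f r oo - fps_X = eta_f r"
proof (rule fps_eq_if_cutoffs_eq)
  fix n
  have "fps_cutoff n (eta_f r oo - fps_X) = fps_cutoff n (qpoch ((- fps_X) ^ r) n)"
    using assms by (intro eta_f_compose_cutoff) auto
  also have "\<dots> = fps_cutoff n (eta_f r)"
    using assms by (subst eta_f_cutoff[where m = n]) auto
  finally show "fps_cutoff n (eta_f r oo - fps_X) = fps_cutoff n (eta_f r)" .
qed

lemma eta_f_1_uminus_X_mult: "(eta_f 1 oo - fps_X) * eta_f 1 * eta_f 4 = eta_f 2 ^ 3"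
proof (rule fps_eq_if_cutoffs_eq)
  fix n
  have "fps_cutoff n ((eta_f 1 oo - fps_X) * eta_f 1 * eta_f 4)
      = fps_cutoff n (qpoch (- fps_X) (2 * n) * qpoch fps_X (2 * n) * qpoch (fps_X ^ 4) n)"
    by (intro fps_cutoff_mult_cong eta_f_compose_cutoff[THEN trans] eta_f_cutoff[THEN trans]) auto
  also have "\<dots> = fps_cutoff n (qpoch (fps_X ^ 2) n ^ 2 * qpoch (fps_X ^ 2) (2 * n))"
    by (simp only: qpoch_uminus_mult)
  also have "\<dots> = fps_cutoff n (eta_f 2 ^ 2 * eta_f 2)"
    by (intro fps_cutoff_mult_cong fps_cutoff_power_cong eta_f_cutoff[symmetric]) auto
  finally show "fps_cutoff n ((eta_f 1 oo - fps_X) * eta_f 1 * eta_f 4) = fps_cutoff n (eta_f 2 ^ 3)"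
    by (simp add: power2_eq_square power3_eq_cube)
qed

section \<open>Triangular numbers and the q-binomial theorem\<close>

fun triangular :: "nat \<Rightarrow> nat" where
  "triangular 0 = 0"
| "triangular (Suc n) = triangular n + n"

lemma triangular_double: "2 * triangular n + n = n * n"
  by (induction n) auto

lemma triangular_double_int: "2 * int (triangular n) = int n * int n - int n"
proof -
  have "int (2 * triangular n + n) = int (n * n)"
    by (simp only: triangular_double)
  then show ?thesis
    by simp
qed

lemma le_triangular_Suc: "n \<le> triangular (Suc n)"
  by (induction n) auto

lemma le_triangular_Suc_Suc: "n \<le> triangular n + 1"
  by (cases n) simp_all

lemma prod_lessThan_power: "(\<Prod>i<K. Q ^ i) = (Q :: 'a::comm_monoid_mult) ^ triangular K"
  by (induction K) (simp_all add: power_add)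

fun qbinom :: "'a::comm_ring_1 \<Rightarrow> nat \<Rightarrow> nat \<Rightarrow> 'a" where
  "qbinom Q 0 j = (if j = 0 then 1 else 0)"
| "qbinom Q (Suc m) j = (if j = 0 then 1 else qbinom Q m (j - 1) + Q ^ j * qbinom Q m j)"

lemma qbinom_0_right [simp]: "qbinom Q m 0 = 1"
  by (cases m) auto

lemma qbinom_eq_0: "m < j \<Longrightarrow> qbinom Q m j = 0"
  by (induction m arbitrary: j) auto

lemma qbinom_Suc_Suc: "qbinom Q (Suc m) (Suc j) = qbinom Q m j + Q ^ Suc j * qbinom Q m (Suc j)"
  by simp

lemma qbinomial_theorem:
  fixes Q x y :: "'a::comm_ring_1"
  shows "(\<Prod>i<m. y + x * Q ^ i) = (\<Sum>j\<le>m. qbinom Q m j * Q ^ triangular j * x ^ j * y ^ (m - j))"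
proof (induction m arbitrary: x)
  case (Suc m)
  define a where "a j = qbinom Q m j * Q ^ triangular j * Q ^ j" for j
  have "(\<Prod>i<Suc m. y + x * Q ^ i) = (y + x) * (\<Prod>i<m. y + (x * Q) * Q ^ i)"
    unfolding prod.lessThan_Suc_shift by (simp add: mult.assoc)
  also have "\<dots> = (y + x) * (\<Sum>j\<le>m. a j * x ^ j * y ^ (m - j))"
    unfolding Suc.IH by (simp add: a_def power_mult_distrib mult.assoc mult.left_commute)
  also have "\<dots> = (\<Sum>j\<le>m. a j * x ^ j * y ^ (Suc m - j)) + (\<Sum>j\<le>m. a j * x ^ Suc j * y ^ (m - j))"
    unfolding sum.distrib[symmetric] sum_distrib_left
    by (rule sum.cong) (auto simp: Suc_diff_le algebra_simps)
  also have "(\<Sum>j\<le>m. a j * x ^ j * y ^ (Suc m - j)) = (\<Sum>j\<le>Suc m. a j * x ^ j * y ^ (Suc m - j))"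
    by (simp add: a_def qbinom_eq_0)
  also have "\<dots> = y ^ Suc m + (\<Sum>j\<le>m. a (Suc j) * x ^ Suc j * y ^ (m - j))"
    by (subst sum.atMost_Suc_shift) (simp add: a_def)
  finally have expand: "(\<Prod>i<Suc m. y + x * Q ^ i) = y ^ Suc m
      + (\<Sum>j\<le>m. a (Suc j) * x ^ Suc j * y ^ (m - j)) + (\<Sum>j\<le>m. a j * x ^ Suc j * y ^ (m - j))" .
  have "(\<Sum>j\<le>Suc m. qbinom Q (Suc m) j * Q ^ triangular j * x ^ j * y ^ (Suc m - j))
      = y ^ Suc m + (\<Sum>j\<le>m. qbinom Q (Suc m) (Suc j) * Q ^ triangular (Suc j) * x ^ Suc j * y ^ (m - j))"
    by (subst sum.atMost_Suc_shift) simp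
  also have "(\<Sum>j\<le>m. qbinom Q (Suc m) (Suc j) * Q ^ triangular (Suc j) * x ^ Suc j * y ^ (m - j))
      = (\<Sum>j\<le>m. a (Suc j) * x ^ Suc j * y ^ (m - j) + a j * x ^ Suc j * y ^ (m - j))"
    by (rule sum.cong) (simp_all add: a_def qbinom_Suc_Suc algebra_simps power_add)
  finally show ?case
    unfolding expand sum.distrib by (simp add: add.assoc)
qed simp

lemma qbinom_mult_qpoch:
  fixes Q :: "'a::comm_ring_1"
  shows "j \<le> m \<Longrightarrow> qbinom Q m j * qpoch Q j * qpoch Q (m - j) = qpoch Q m"
proof (induction m arbitrary: j)
  case (Suc m)
  show ?case
  proof (cases j)
    case (Suc i)
    with Suc.prems have "i \<le> m"
      by simp
    have left: "qbinom Q m i * qpoch Q (Suc i) * qpoch Q (m - i) = qpoch Q m * (1 - Q ^ Suc i)"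
    proof -
      have "qbinom Q m i * qpoch Q (Suc i) * qpoch Q (m - i)
          = (qbinom Q m i * qpoch Q i * qpoch Q (m - i)) * (1 - Q ^ Suc i)"
        by (simp only: qpoch_Suc mult_ac)
      then show ?thesis
        by (simp only: Suc.IH[OF \<open>i \<le> m\<close>])
    qed
    have right: "Q ^ Suc i * qbinom Q m (Suc i) * qpoch Q (Suc i) * qpoch Q (m - i)
        = qpoch Q m * (Q ^ Suc i - Q ^ Suc m)"
    proof (cases "i = m")
      case False
      with \<open>i \<le> m\<close> have "Suc i \<le> m"
        by simp
      have power: "Q ^ Suc i * Q ^ Suc (m - Suc i) = Q ^ Suc m"
        unfolding power_add[symmetric] using \<open>Suc i \<le> m\<close> by (intro arg_cong[where f = "power Q"]) simp
      have "m - i = Suc (m - Suc i)"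
        using \<open>Suc i \<le> m\<close> by simp
      then have split: "qpoch Q (m - i) = qpoch Q (m - Suc i) * (1 - Q ^ Suc (m - Suc i))"
        by (simp only: qpoch_Suc)
      have ring: "a * q * p * (p' * (1 - b)) = (q * p * p') * (a - a * b)" for a q p p' b :: 'a
        by (simp add: algebra_simps)
      show ?thesis
        by (simp only: split ring power Suc.IH[OF \<open>Suc i \<le> m\<close>])
    qed (simp add: qbinom_eq_0)
    have "qbinom Q (Suc m) j * qpoch Q j * qpoch Q (Suc m - j)
        = qbinom Q m i * qpoch Q (Suc i) * qpoch Q (m - i)
          + Q ^ Suc i * qbinom Q m (Suc i) * qpoch Q (Suc i) * qpoch Q (m - i)"
      by (simp add: Suc qbinom_Suc_Suc algebra_simps)
    also have "\<dots> = qpoch Q (Suc m)"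
      by (simp only: left right) (simp add: qpoch_Suc algebra_simps)
    finally show ?thesis .
  qed simp
qed simp

lemma qbinom_X_power_mult_eta_f_cutoff:
  assumes "0 < s" "j \<le> m" "n \<le> j" "n \<le> m - j"
  shows "fps_cutoff n (qbinom (fps_X ^ s) m j * eta_f s) = fps_cutoff n 1"
proof -
  have "fps_cutoff n (eta_f s * (qbinom (fps_X ^ s) m j * eta_f s))
      = fps_cutoff n (qpoch (fps_X ^ s) j * (qbinom (fps_X ^ s) m j * qpoch (fps_X ^ s) (m - j)))"
    using assms by (intro fps_cutoff_mult_cong[OF eta_f_cutoff fps_cutoff_mult_cong[OF refl eta_f_cutoff]]) auto
  also have "\<dots> = fps_cutoff n (qpoch (fps_X ^ s) m)"
    using qbinom_mult_qpoch[OF \<open>j \<le> m\<close>, of "fps_X ^ s :: int fps"] by (simp add: ac_simps)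
  also have "\<dots> = fps_cutoff n (eta_f s * 1)"
    using assms by (simp add: eta_f_cutoff[where m = m])
  finally show ?thesis
    by (rule fps_cutoff_mult_cancel_left) (simp add: eta_f_nth_0 assms)
qed

lemma qbinom_sum_mult_eta_f_cutoff:
  fixes c :: "nat \<Rightarrow> int fps"
  assumes "0 < s" "\<And>j. j \<in> J \<Longrightarrow> e j < n \<Longrightarrow> j \<le> m \<and> n \<le> j \<and> n \<le> m - j"
  shows "fps_cutoff n ((\<Sum>j\<in>J. c j * qbinom (fps_X ^ s) m j * fps_X ^ e j) * eta_f s)
    = fps_cutoff n (\<Sum>j\<in>J. c j * fps_X ^ e j)"
  unfolding sum_distrib_right
proof (rule fps_cutoff_sum_cong)
  fix j assume "j \<in> J"
  show "fps_cutoff n (c j * qbinom (fps_X ^ s) m j * fps_X ^ e j * eta_f s)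
      = fps_cutoff n (c j * fps_X ^ e j)"
  proof (cases "e j < n")
    case True
    then have "fps_cutoff n (c j * fps_X ^ e j * (qbinom (fps_X ^ s) m j * eta_f s))
        = fps_cutoff n (c j * fps_X ^ e j * 1)"
      using assms \<open>j \<in> J\<close> by (intro fps_cutoff_mult_cong[OF refl qbinom_X_power_mult_eta_f_cutoff]) auto
    then show ?thesis
      by (simp add: ac_simps)
  next
    case False
    then have "fps_cutoff n (fps_X ^ e j * (c j * qbinom (fps_X ^ s) m j * eta_f s))
        = fps_cutoff n (fps_X ^ e j * c j)"
      by (simp add: fps_cutoff_X_power_mult)
    then show ?thesis
      by (simp add: ac_simps)
  qed
qed

section \<open>Theta series\<close>

definition lacunary_sum :: "(nat \<Rightarrow> 'a::comm_ring_1) \<Rightarrow> (nat \<Rightarrow> nat) \<Rightarrow> nat \<Rightarrow> 'a fps" where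
  "lacunary_sum c e N = (\<Sum>k<N. fps_const (c k) * fps_X ^ e k)"

text \<open>Only meaningful when \<open>k \<le> e k\<close>, so that the terms with \<open>k > n\<close> do not reach degree \<open>n\<close>.\<close>
definition lacunary_series :: "(nat \<Rightarrow> 'a::comm_ring_1) \<Rightarrow> (nat \<Rightarrow> nat) \<Rightarrow> 'a fps" where
  "lacunary_series c e = Abs_fps (\<lambda>n. lacunary_sum c e (Suc n) $ n)"

lemma lacunary_sum_Suc:
  "lacunary_sum c e (Suc N) = lacunary_sum c e N + fps_const (c N) * fps_X ^ e N"
  by (simp add: lacunary_sum_def)

lemma lacunary_sum_nth: "lacunary_sum c e N $ n = (\<Sum>k<N. if e k = n then c k else 0)"
  by (auto simp: lacunary_sum_def fps_sum_nth intro!: sum.cong)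

lemma lacunary_sum_cutoff_stable:
  assumes "\<And>k. k \<le> e k" "n \<le> N" "N \<le> M"
  shows "fps_cutoff n (lacunary_sum c e M) = fps_cutoff n (lacunary_sum c e N)"
  using assms(3)
proof (induction M rule: dec_induct)
  case (step m)
  have "n \<le> e m"
    using assms(1)[of m] assms(2) step.hyps by linarith
  then have "fps_cutoff n (fps_const (c m) * fps_X ^ e m) = 0"
    using fps_cutoff_X_power_mult[of n "e m" "fps_const (c m)"] by (simp add: mult.commute)
  then show ?case
    using step.IH by (simp add: lacunary_sum_Suc fps_cutoff_add)
qed simp

lemma lacunary_series_cutoff:
  assumes "\<And>k. k \<le> e k" "n \<le> N"
  shows "fps_cutoff n (lacunary_series c e) = fps_cutoff n (lacunary_sum c e N)"
proof -
  have "lacunary_series c e $ i = lacunary_sum c e N $ i" if "i < n" for i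
  proof -
    have "lacunary_sum c e N $ i = lacunary_sum c e (Suc i) $ i"
      using assms that by (intro fps_nth_eq_if_cutoff_Suc_eq lacunary_sum_cutoff_stable) auto
    then show ?thesis
      by (simp add: lacunary_series_def)
  qed
  then show ?thesis
    by (simp add: fps_cutoff_eq_fps_cutoff_iff)
qed

lemma lacunary_sum_compose_uminus_X:
  fixes c :: "nat \<Rightarrow> 'a::idom"
  shows "lacunary_sum c e N oo - fps_X = lacunary_sum (\<lambda>k. (-1) ^ e k * c k) e N"
proof (rule fps_ext)
  fix n
  have "(lacunary_sum c e N oo - fps_X) $ n = (-1) ^ n * (\<Sum>k<N. if e k = n then c k else 0)"
    by (simp add: fps_compose_uminus' lacunary_sum_nth)
  also have "\<dots> = lacunary_sum (\<lambda>k. (-1) ^ e k * c k) e N $ n"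
    by (auto simp: lacunary_sum_nth sum_distrib_left intro!: sum.cong)
  finally show "(lacunary_sum c e N oo - fps_X) $ n = lacunary_sum (\<lambda>k. (-1) ^ e k * c k) e N $ n" .
qed

lemma lacunary_sum_compose_X_power:
  fixes c :: "nat \<Rightarrow> 'a::idom"
  shows "0 < k \<Longrightarrow> lacunary_sum c e N oo fps_X ^ k = lacunary_sum c (\<lambda>j. k * e j) N"
  by (simp add: lacunary_sum_def fps_compose_sum_distrib fps_compose_mult_distrib
      fps_X_power_compose power_mult)

lemma lacunary_series_compose_uminus_X:
  fixes c :: "nat \<Rightarrow> 'a::idom"
  assumes "\<And>k. k \<le> e k"
  shows "lacunary_series c e oo - fps_X = lacunary_series (\<lambda>k. (-1) ^ e k * c k) e"
proof (rule fps_eq_if_cutoffs_eq)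
  fix n
  have "fps_cutoff n (lacunary_series c e oo - fps_X) = fps_cutoff n (lacunary_sum c e n oo - fps_X)"
    using assms by (intro fps_cutoff_compose_cong lacunary_series_cutoff) auto
  also have "\<dots> = fps_cutoff n (lacunary_series (\<lambda>k. (-1) ^ e k * c k) e)"
    using assms by (simp add: lacunary_sum_compose_uminus_X lacunary_series_cutoff[where N = n])
  finally show "fps_cutoff n (lacunary_series c e oo - fps_X)
      = fps_cutoff n (lacunary_series (\<lambda>k. (-1) ^ e k * c k) e)" .
qed

lemma lacunary_series_compose_X_power:
  fixes c :: "nat \<Rightarrow> 'a::idom"
  assumes "\<And>j. j \<le> e j" "0 < k"
  shows "lacunary_series c e oo fps_X ^ k = lacunary_series c (\<lambda>j. k * e j)"
proof (rule fps_eq_if_cutoffs_eq)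
  fix n
  have ke: "j \<le> k * e j" for j
    using assms(1)[of j] assms(2) by (simp add: le_trans)
  have "fps_cutoff n (lacunary_series c e oo fps_X ^ k) = fps_cutoff n (lacunary_sum c e n oo fps_X ^ k)"
    using assms by (intro fps_cutoff_compose_cong lacunary_series_cutoff) auto
  also have "\<dots> = fps_cutoff n (lacunary_series c (\<lambda>j. k * e j))"
    using assms ke by (simp add: lacunary_sum_compose_X_power lacunary_series_cutoff[where N = n])
  finally show "fps_cutoff n (lacunary_series c e oo fps_X ^ k)
      = fps_cutoff n (lacunary_series c (\<lambda>j. k * e j))" .
qed

text \<open>Ramanujan's theta functions \<open>\<phi>(q) = \<Sum>\<^sub>k\<^sub>\<in>\<^sub>\<int> q\<^bsup>k\<^sup>2\<^esup>\<close> and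
  \<open>\<psi>(q) = \<Sum>\<^sub>k\<^sub>\<ge>\<^sub>0 q\<^bsup>k(k+1)/2\<^esup>\<close>.\<close>
definition phi :: "int fps" where
  "phi = lacunary_series (\<lambda>k. if k = 0 then 1 else 2) (\<lambda>k. k * k)"

definition psi :: "int fps" where
  "psi = lacunary_series (\<lambda>_. 1) (\<lambda>k. triangular (Suc k))"

lemma psi_cutoff:
  "n \<le> N \<Longrightarrow> fps_cutoff n psi = fps_cutoff n (lacunary_sum (\<lambda>_. 1) (\<lambda>k. triangular (Suc k)) N)"
  unfolding psi_def by (rule lacunary_series_cutoff) (simp_all add: le_triangular_Suc)

lemma phi_compose_uminus_X:
  "phi oo - fps_X = lacunary_series (\<lambda>k. if k = 0 then 1 else 2 * (-1) ^ k) (\<lambda>k. k * k)"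
proof -
  have "(-1 :: int) ^ (k * k) * (if k = 0 then 1 else 2) = (if k = 0 then 1 else 2 * (-1) ^ k)" for k
    by (cases "even k") (auto simp: power_mult elim: oddE)
  then show ?thesis
    unfolding phi_def by (subst lacunary_series_compose_uminus_X) simp_all
qed

text \<open>Split by the parity of \<open>k\<close>, using \<open>(2j + 1)\<^sup>2 = 8 \<cdot> triangular (j + 1) + 1\<close>.\<close>
lemma lacunary_sum_phi_uminus_split:
  "lacunary_sum (\<lambda>k. if k = 0 then 1 else 2 * (-1) ^ k) (\<lambda>k. k * k) (2 * N + 1)
    = lacunary_sum (\<lambda>k. if k = 0 then 1 else 2) (\<lambda>k. 4 * (k * k)) (Suc N)
      - 2 * fps_X * lacunary_sum (\<lambda>_. 1) (\<lambda>k. 8 * triangular (Suc k)) N"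
  (is "lacunary_sum ?c ?e _ = lacunary_sum ?c4 ?e4 _ - 2 * fps_X * lacunary_sum ?c8 ?e8 _")
proof (induction N)
  case (Suc N)
  have odd_square: "Suc (2 * N) * Suc (2 * N) = Suc (8 * triangular (Suc N))"
    using triangular_double[of N] by (simp add: algebra_simps)
  have even_square: "Suc (Suc (2 * N)) * Suc (Suc (2 * N)) = 4 * (Suc N * Suc N)"
    by (simp add: algebra_simps)
  have "lacunary_sum ?c ?e (2 * Suc N + 1) = lacunary_sum ?c ?e (2 * N + 1)
      - 2 * fps_X ^ Suc (8 * triangular (Suc N)) + 2 * fps_X ^ (4 * (Suc N * Suc N))"
  proof -
    have "2 * Suc N + 1 = Suc (Suc (2 * N + 1))" "2 * N + 1 = Suc (2 * N)"
      by simp_all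
    then show ?thesis
      by (simp only: lacunary_sum_Suc odd_square even_square)
        (simp flip: numeral_fps_const neg_numeral_fps_const)
  qed
  also have "\<dots> = lacunary_sum ?c4 ?e4 (Suc (Suc N)) - 2 * fps_X * lacunary_sum ?c8 ?e8 (Suc N)"
    by (simp only: Suc.IH lacunary_sum_Suc) (simp add: algebra_simps flip: numeral_fps_const)
  finally show ?case .
qed (simp add: lacunary_sum_def)

lemma phi_uminus_split: "phi oo - fps_X = (phi oo fps_X ^ 4) - 2 * fps_X * (psi oo fps_X ^ 8)"
proof (rule fps_eq_if_cutoffs_eq)
  fix n
  have phi4: "phi oo fps_X ^ 4 = lacunary_series (\<lambda>k. if k = 0 then 1 else 2) (\<lambda>k. 4 * (k * k))"
    unfolding phi_def by (rule lacunary_series_compose_X_power) simp_all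
  have psi8: "psi oo fps_X ^ 8 = lacunary_series (\<lambda>_. 1) (\<lambda>k. 8 * triangular (Suc k))"
    unfolding psi_def by (rule lacunary_series_compose_X_power) (simp_all add: le_triangular_Suc)
  have "fps_cutoff n (phi oo - fps_X)
      = fps_cutoff n (lacunary_sum (\<lambda>k. if k = 0 then 1 else 2 * (-1) ^ k) (\<lambda>k. k * k) (2 * n + 1))"
    unfolding phi_compose_uminus_X by (rule lacunary_series_cutoff) simp_all
  also have "\<dots> = fps_cutoff n (lacunary_sum (\<lambda>k. if k = 0 then 1 else 2) (\<lambda>k. 4 * (k * k)) (Suc n)
      - 2 * fps_X * lacunary_sum (\<lambda>_. 1) (\<lambda>k. 8 * triangular (Suc k)) n)"
    by (simp only: lacunary_sum_phi_uminus_split)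
  also have "\<dots> = fps_cutoff n ((phi oo fps_X ^ 4) - 2 * fps_X * (psi oo fps_X ^ 8))"
  proof -
    have "k \<le> 8 * triangular (Suc k)" for k
      using le_triangular_Suc[of k] by linarith
    then have "fps_cutoff n (2 * fps_X * lacunary_sum (\<lambda>_. 1) (\<lambda>k. 8 * triangular (Suc k)) n)
        = fps_cutoff n (2 * fps_X * (psi oo fps_X ^ 8))"
      unfolding psi8 by (intro fps_cutoff_mult_cong[OF refl] lacunary_series_cutoff[symmetric]) auto
    moreover have "fps_cutoff n (lacunary_sum (\<lambda>k. if k = 0 then 1 else 2) (\<lambda>k. 4 * (k * k)) (Suc n))
        = fps_cutoff n (phi oo fps_X ^ 4)"
      unfolding phi4 by (rule lacunary_series_cutoff[symmetric]) simp_all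
    ultimately show ?thesis
      by (simp only: fps_cutoff_diff)
  qed
  finally show "fps_cutoff n (phi oo - fps_X) = fps_cutoff n ((phi oo fps_X ^ 4) - 2 * fps_X * (psi oo fps_X ^ 8))" .
qed

lemma phi_split: "phi = (phi oo fps_X ^ 4) + 2 * fps_X * (psi oo fps_X ^ 8)"
proof -
  have "phi = (phi oo - fps_X) oo - fps_X"
    by (simp add: fps_compose_uminus_X_twice)
  also have "\<dots> = (phi oo fps_X ^ 4) + 2 * fps_X * (psi oo fps_X ^ 8)"
    unfolding phi_uminus_split
    by (simp add: fps_compose_sub_distrib fps_compose_mult_distrib fps_compose_even_X_power_uminus_X
        numeral_fps_const)
  finally show ?thesis .
qed

section \<open>Gauss's product formulas\<close>

lemma gauss_phi_finite_prod_lower: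
  fixes Q :: "'a::comm_ring_1"
  shows "(\<Prod>i<K. Q ^ (2 * K - 1) + (-1) * (Q ^ 2) ^ i) = (-1) ^ K * Q ^ (2 * triangular K) * qpoch_odd Q K"
proof -
  have "(\<Prod>i<K. Q ^ (2 * K - 1) + (-1) * (Q ^ 2) ^ i)
      = (\<Prod>i<K. (-1) * ((Q ^ 2) ^ i * (1 - Q ^ Suc (2 * (K - Suc i)))))"
  proof (rule prod.cong)
    fix i assume "i \<in> {..<K}"
    then have "(Q ^ 2) ^ i * Q ^ Suc (2 * (K - Suc i)) = Q ^ (2 * K - 1)"
      unfolding power_mult[symmetric] power_add[symmetric] by (intro arg_cong[where f = "power Q"]) auto
    then show "Q ^ (2 * K - 1) + (-1) * (Q ^ 2) ^ i = (-1) * ((Q ^ 2) ^ i * (1 - Q ^ Suc (2 * (K - Suc i))))"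
      by (simp add: algebra_simps)
  qed simp
  moreover have "(\<Prod>i<K. 1 - Q ^ Suc (2 * (K - Suc i))) = qpoch_odd Q K"
    unfolding qpoch_odd_def by (rule prod.nat_diff_reindex)
  ultimately show ?thesis
    by (simp only: prod.distrib prod_constant card_lessThan prod_lessThan_power mult.assoc power_mult)
qed

lemma gauss_phi_finite_prod_upper:
  fixes Q :: "'a::comm_ring_1"
  assumes "1 \<le> K"
  shows "(\<Prod>i<K. Q ^ (2 * K - 1) + (-1) * (Q ^ 2) ^ (K + i)) = Q ^ ((2 * K - 1) * K) * qpoch_odd Q K"
proof -
  have "(\<Prod>i<K. Q ^ (2 * K - 1) + (-1) * (Q ^ 2) ^ (K + i)) = (\<Prod>i<K. Q ^ (2 * K - 1) * (1 - Q ^ Suc (2 * i)))"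
  proof (rule prod.cong)
    fix i
    have "Q ^ (2 * K - 1) * Q ^ Suc (2 * i) = (Q ^ 2) ^ (K + i)"
      unfolding power_add[symmetric] power_mult[symmetric] using assms
      by (intro arg_cong[where f = "power Q"]) simp
    then show "Q ^ (2 * K - 1) + (-1) * (Q ^ 2) ^ (K + i) = Q ^ (2 * K - 1) * (1 - Q ^ Suc (2 * i))"
      by (simp add: algebra_simps)
  qed simp
  then show ?thesis
    by (simp add: prod.distrib qpoch_odd_def power_mult)
qed

lemma gauss_phi_finite_prod:
  fixes Q :: "'a::comm_ring_1"
  assumes "1 \<le> K"
  shows "(\<Prod>i<2 * K. Q ^ (2 * K - 1) + (-1) * (Q ^ 2) ^ i)
    = Q ^ (2 * triangular K + (2 * K - 1) * K) * ((-1) ^ K * qpoch_odd Q K ^ 2)"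
proof -
  have "(\<Prod>i<2 * K. Q ^ (2 * K - 1) + (-1) * (Q ^ 2) ^ i)
      = (\<Prod>i<K. Q ^ (2 * K - 1) + (-1) * (Q ^ 2) ^ i) * (\<Prod>i<K. Q ^ (2 * K - 1) + (-1) * (Q ^ 2) ^ (K + i))"
    by (simp only: mult_2 prod.lessThan_add_split)
  also have "\<dots> = Q ^ (2 * triangular K + (2 * K - 1) * K) * ((-1) ^ K * qpoch_odd Q K ^ 2)"
    by (simp only: gauss_phi_finite_prod_lower gauss_phi_finite_prod_upper[OF assms])
      (simp add: power_add power2_eq_square ac_simps)
  finally show ?thesis .
qed

definition absdiff :: "nat \<Rightarrow> nat \<Rightarrow> nat" where
  "absdiff j K = nat \<bar>int j - int K\<bar>"

lemma gauss_phi_exponent: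
  assumes "1 \<le> K" "j \<le> 2 * K"
  shows "2 * triangular j + (2 * K - 1) * (2 * K - j)
    = 2 * triangular K + (2 * K - 1) * K + absdiff j K * absdiff j K"
proof -
  have "int (absdiff j K * absdiff j K) = (int j - int K) * (int j - int K)"
    by (simp add: absdiff_def abs_mult_self_eq)
  moreover have "int (2 * K - 1) = 2 * int K - 1" "int (2 * K - j) = 2 * int K - int j"
    using assms by simp_all
  ultimately have "int (2 * triangular j + (2 * K - 1) * (2 * K - j))
      = int (2 * triangular K + (2 * K - 1) * K + absdiff j K * absdiff j K)"
    by (simp only: of_nat_add of_nat_mult of_nat_numeral triangular_double_int) (simp add: algebra_simps)
  then show ?thesis
    by (simp only: of_nat_eq_iff)
qed

lemma gauss_phi_finite:
  assumes "1 \<le> K"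
  shows "fps_const ((-1) ^ K) * qpoch_odd (fps_X :: int fps) K ^ 2
    = (\<Sum>j\<le>2 * K. fps_const ((-1) ^ j) * qbinom (fps_X ^ 2) (2 * K) j * fps_X ^ (absdiff j K * absdiff j K))"
proof -
  define E where "E = 2 * triangular K + (2 * K - 1) * K"
  have summand: "qbinom (fps_X ^ 2 :: int fps) (2 * K) j * (fps_X ^ 2) ^ triangular j * (-1) ^ j
      * (fps_X ^ (2 * K - 1)) ^ (2 * K - j)
    = fps_X ^ E * (fps_const ((-1) ^ j) * qbinom (fps_X ^ 2) (2 * K) j * fps_X ^ (absdiff j K * absdiff j K))"
    if "j \<in> {..2 * K}" for j
  proof -
    have powers: "(fps_X ^ 2) ^ triangular j * (fps_X ^ (2 * K - 1)) ^ (2 * K - j)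
        = fps_X ^ E * (fps_X :: int fps) ^ (absdiff j K * absdiff j K)"
      unfolding E_def power_mult[symmetric] power_add[symmetric] using that gauss_phi_exponent[OF assms]
      by simp
    have "qbinom (fps_X ^ 2 :: int fps) (2 * K) j * (fps_X ^ 2) ^ triangular j * (-1) ^ j
        * (fps_X ^ (2 * K - 1)) ^ (2 * K - j) = fps_const ((-1) ^ j) * qbinom (fps_X ^ 2) (2 * K) j
          * ((fps_X ^ 2) ^ triangular j * (fps_X ^ (2 * K - 1)) ^ (2 * K - j))"
      by (simp only: fps_const_neg_one_power mult_ac)
    then show ?thesis
      unfolding powers by (simp only: mult_ac)
  qed
  have "fps_X ^ E * (fps_const ((-1) ^ K) * qpoch_odd (fps_X :: int fps) K ^ 2)
      = (\<Sum>j\<le>2 * K. qbinom (fps_X ^ 2) (2 * K) j * (fps_X ^ 2) ^ triangular j * (-1) ^ j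
          * (fps_X ^ (2 * K - 1)) ^ (2 * K - j))"
    unfolding E_def fps_const_neg_one_power[symmetric] gauss_phi_finite_prod[OF assms, symmetric]
    by (rule qbinomial_theorem)
  also have "\<dots> = fps_X ^ E * (\<Sum>j\<le>2 * K. fps_const ((-1) ^ j) * qbinom (fps_X ^ 2) (2 * K) j
      * fps_X ^ (absdiff j K * absdiff j K))"
    unfolding sum_distrib_left by (rule sum.cong[OF refl summand])
  finally show ?thesis
    by simp
qed

lemma neg_one_power_add_diff: "a \<le> K \<Longrightarrow> (-1 :: 'a::ring_1) ^ (K + (K - a)) = (-1) ^ a"
proof -
  assume "a \<le> K"
  then have "K + (K - a) = 2 * (K - a) + a"
    by simp
  then show ?thesis
    by (simp only: power_add power_mult) simp
qed

lemma neg_one_power_add_add: "(-1 :: 'a::ring_1) ^ (K + (K + a)) = (-1) ^ a"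
proof -
  have "K + (K + a) = 2 * K + a"
    by simp
  then show ?thesis
    by (simp only: power_add power_mult) simp
qed

lemma sum_atMost_double:
  "(\<Sum>j\<le>2 * K. g j) = g K + (\<Sum>k<K. g (K - Suc k) + g (K + Suc k))"
proof -
  have "{..2 * K} = {..<K + Suc K}"
    by auto
  then have "(\<Sum>j\<le>2 * K. g j) = (\<Sum>j<K. g j) + (\<Sum>i<Suc K. g (K + i))"
    by (simp only: sum.lessThan_add_split)
  also have "(\<Sum>i<Suc K. g (K + i)) = g K + (\<Sum>i<K. g (K + Suc i))"
    by (simp only: sum.lessThan_Suc_shift) simp
  also have "(\<Sum>j<K. g j) = (\<Sum>k<K. g (K - Suc k))"
    by (rule sum.nat_diff_reindex[symmetric])
  finally show ?thesis
    by (simp add: sum.distrib ac_simps)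
qed

lemma lacunary_sum_phi_uminus_pairing:
  "fps_const ((-1) ^ K) * (\<Sum>j\<le>2 * K. fps_const ((-1) ^ j) * (fps_X :: int fps) ^ (absdiff j K * absdiff j K))
    = lacunary_sum (\<lambda>k. if k = 0 then 1 else 2 * (-1) ^ k) (\<lambda>k. k * k) (Suc K)"
proof -
  have "fps_const ((-1) ^ K) * (\<Sum>j\<le>2 * K. fps_const ((-1) ^ j) * (fps_X :: int fps) ^ (absdiff j K * absdiff j K))
      = (\<Sum>j\<le>2 * K. fps_const ((-1) ^ (K + j)) * fps_X ^ (absdiff j K * absdiff j K))"
    by (simp add: sum_distrib_left power_add mult.assoc[symmetric])
  also have "\<dots> = 1 + (\<Sum>k<K. fps_const (2 * (-1) ^ Suc k) * fps_X ^ (Suc k * Suc k))"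
  proof -
    have centre: "fps_const ((-1) ^ (K + K)) * fps_X ^ (absdiff K K * absdiff K K) = (1 :: int fps)"
      by (simp add: absdiff_def flip: mult_2)
    have pair: "fps_const ((-1) ^ (K + (K - Suc k))) * fps_X ^ (absdiff (K - Suc k) K * absdiff (K - Suc k) K)
        + fps_const ((-1) ^ (K + (K + Suc k))) * fps_X ^ (absdiff (K + Suc k) K * absdiff (K + Suc k) K)
        = fps_const (2 * (-1) ^ Suc k) * (fps_X :: int fps) ^ (Suc k * Suc k)"
      if "k \<in> {..<K}" for k
    proof -
      have "absdiff (K - Suc k) K = Suc k" "absdiff (K + Suc k) K = Suc k"
        using that by (simp_all add: absdiff_def of_nat_diff)
      moreover have "(-1 :: int) ^ (K + (K - Suc k)) = (-1) ^ Suc k"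
        using that by (intro neg_one_power_add_diff) simp
      moreover have "(-1 :: int) ^ (K + (K + Suc k)) = (-1) ^ Suc k"
        by (rule neg_one_power_add_add)
      moreover have "fps_const c * f + fps_const c * f = fps_const (2 * c) * f" for c :: int and f
        by (simp only: mult_2 fps_const_add[symmetric] distrib_right)
      ultimately show ?thesis
        by (simp only:)
    qed
    show ?thesis
      by (subst sum_atMost_double, subst centre) (rule arg_cong[where f = "plus 1"], rule sum.cong[OF refl pair])
  qed
  also have "\<dots> = lacunary_sum (\<lambda>k. if k = 0 then 1 else 2 * (-1) ^ k) (\<lambda>k. k * k) (Suc K)"
    unfolding lacunary_sum_def by (simp only: sum.lessThan_Suc_shift) simp
  finally show ?thesis .
qed

lemma absdiff_square_less:
  assumes "absdiff j K * absdiff j K < n"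
  shows "K < j + n \<and> j < K + n"
proof -
  have "absdiff j K \<le> absdiff j K * absdiff j K"
    by (cases "absdiff j K") auto
  then have "absdiff j K < n"
    using assms by linarith
  then show ?thesis
    unfolding absdiff_def by linarith
qed

text \<open>Truncating at \<open>K = 2n + 1\<close> makes every Gaussian binomial in \<open>gauss_phi_finite\<close> that
  contributes below degree \<open>n\<close> agree there with \<open>1 / f\<^sub>2\<close>.\<close>
lemma phi_uminus_cutoff_qpoch_odd:
  assumes "K = 2 * n + 1"
  shows "fps_cutoff n (phi oo - fps_X) = fps_cutoff n (qpoch_odd fps_X K ^ 2 * eta_f 2)"
proof -
  define T where "T = (\<Sum>j\<le>2 * K. fps_const ((-1) ^ j) * (fps_X :: int fps) ^ (absdiff j K * absdiff j K))"
  have "fps_cutoff n T = fps_cutoff n ((\<Sum>j\<le>2 * K. fps_const ((-1) ^ j) * qbinom (fps_X ^ 2) (2 * K) j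
      * fps_X ^ (absdiff j K * absdiff j K)) * eta_f 2)"
    unfolding T_def by (rule qbinom_sum_mult_eta_f_cutoff[symmetric]) (auto dest: absdiff_square_less simp: assms)
  also have "\<dots> = fps_cutoff n (fps_const ((-1) ^ K) * qpoch_odd fps_X K ^ 2 * eta_f 2)"
    using gauss_phi_finite[of K] assms by simp
  finally have T_cutoff: "fps_cutoff n T = fps_cutoff n (fps_const ((-1) ^ K) * qpoch_odd fps_X K ^ 2 * eta_f 2)" .
  have "fps_cutoff n (phi oo - fps_X)
      = fps_cutoff n (lacunary_sum (\<lambda>k. if k = 0 then 1 else 2 * (-1) ^ k) (\<lambda>k. k * k) (Suc K))"
    unfolding phi_compose_uminus_X by (rule lacunary_series_cutoff) (simp_all add: assms)
  also have "\<dots> = fps_cutoff n (fps_const ((-1) ^ K) * T)"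
    by (simp only: T_def lacunary_sum_phi_uminus_pairing)
  also have "\<dots> = fps_cutoff n (fps_const ((-1) ^ K) * (fps_const ((-1) ^ K) * qpoch_odd fps_X K ^ 2 * eta_f 2))"
    by (rule fps_cutoff_mult_cong[OF refl T_cutoff])
  also have "fps_const ((-1) ^ K) * (fps_const ((-1) ^ K) * qpoch_odd fps_X K ^ 2 * eta_f 2)
      = qpoch_odd fps_X K ^ 2 * eta_f 2"
  proof -
    have "fps_const ((-1) ^ K) * fps_const ((-1) ^ K) = (1 :: int fps)"
      by (simp flip: power_add mult_2)
    then show ?thesis
      by (simp only: mult.assoc[symmetric] mult_1_left)
  qed
  finally show ?thesis .
qed

lemma gauss_phi_uminus: "(phi oo - fps_X) * eta_f 2 = eta_f 1 ^ 2"
proof (rule fps_eq_if_cutoffs_eq)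
  fix n :: nat
  define K where "K = 2 * n + 1"
  have "fps_cutoff n ((phi oo - fps_X) * eta_f 2) = fps_cutoff n (qpoch_odd fps_X K ^ 2 * eta_f 2 * eta_f 2)"
    using phi_uminus_cutoff_qpoch_odd[OF K_def] by (rule fps_cutoff_mult_cong[OF _ refl])
  also have "\<dots> = fps_cutoff n (qpoch_odd fps_X K ^ 2 * qpoch (fps_X ^ 2) K * qpoch (fps_X ^ 2) K)"
    by (intro fps_cutoff_mult_cong[OF fps_cutoff_mult_cong[OF refl eta_f_cutoff] eta_f_cutoff]) (simp_all add: K_def)
  also have "\<dots> = fps_cutoff n ((qpoch_odd fps_X K * qpoch (fps_X ^ 2) K) ^ 2)"
    by (simp only: power2_eq_square mult_ac)
  also have "\<dots> = fps_cutoff n (qpoch (fps_X ^ 1) (2 * K) ^ 2)"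
    by (simp only: qpoch_odd_mult power_one_right)
  also have "\<dots> = fps_cutoff n (eta_f 1 ^ 2)"
    by (intro fps_cutoff_power_cong eta_f_cutoff[symmetric]) (simp_all add: K_def)
  finally show "fps_cutoff n ((phi oo - fps_X) * eta_f 2) = fps_cutoff n (eta_f 1 ^ 2)" .
qed

lemma gauss_psi_finite_prod_lower:
  fixes Q :: "'a::comm_ring_1"
  shows "(\<Prod>i<K. Q ^ K + 1 * Q ^ i) = Q ^ triangular K * qpoch_neg Q K"
proof -
  have "(\<Prod>i<K. Q ^ K + 1 * Q ^ i) = (\<Prod>i<K. Q ^ i * (1 + Q ^ Suc (K - Suc i)))"
  proof (rule prod.cong)
    fix i assume "i \<in> {..<K}"
    then have "Q ^ i * Q ^ Suc (K - Suc i) = Q ^ K"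
      unfolding power_add[symmetric] by (intro arg_cong[where f = "power Q"]) auto
    then show "Q ^ K + 1 * Q ^ i = Q ^ i * (1 + Q ^ Suc (K - Suc i))"
      by (simp add: algebra_simps)
  qed simp
  also have "\<dots> = Q ^ triangular K * qpoch_neg Q K"
    unfolding prod.distrib prod_lessThan_power qpoch_neg_def
    by (simp only: prod.nat_diff_reindex[where g = "\<lambda>t. 1 + Q ^ Suc t"])
  finally show ?thesis .
qed

lemma gauss_psi_finite_prod_upper:
  fixes Q :: "'a::comm_ring_1"
  shows "(\<Prod>i<Suc K. Q ^ K + 1 * Q ^ (K + i)) = 2 * Q ^ K * (Q ^ (K * K) * qpoch_neg Q K)"
proof -
  have "(\<Prod>i<K. Q ^ K + 1 * Q ^ (K + Suc i)) = (\<Prod>i<K. Q ^ K * (1 + Q ^ Suc i))"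
    by (rule prod.cong) (simp_all add: algebra_simps power_add)
  also have "\<dots> = Q ^ (K * K) * qpoch_neg Q K"
    by (simp add: prod.distrib qpoch_neg_def power_mult)
  moreover have "Q ^ K + 1 * Q ^ (K + 0) = 2 * Q ^ K"
    by (simp only: mult_2 mult_1_left add_0_right)
  ultimately show ?thesis
    by (simp only: prod.lessThan_Suc_shift)
qed

lemma gauss_psi_finite_prod:
  fixes Q :: "'a::comm_ring_1"
  shows "(\<Prod>i<2 * K + 1. Q ^ K + 1 * Q ^ i) = Q ^ (triangular K + K + K * K) * (2 * qpoch_neg Q K ^ 2)"
proof -
  have "{..<2 * K + 1} = {..<K + Suc K}"
    by simp
  then have "(\<Prod>i<2 * K + 1. Q ^ K + 1 * Q ^ i)
      = (\<Prod>i<K. Q ^ K + 1 * Q ^ i) * (\<Prod>i<Suc K. Q ^ K + 1 * Q ^ (K + i))"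
    by (simp only: prod.lessThan_add_split)
  also have "\<dots> = Q ^ (triangular K + K + K * K) * (2 * qpoch_neg Q K ^ 2)"
    by (simp only: gauss_psi_finite_prod_lower gauss_psi_finite_prod_upper)
      (simp only: power_add power2_eq_square mult_ac)
  finally show ?thesis .
qed

definition psi_exponent :: "nat \<Rightarrow> nat \<Rightarrow> nat" where
  "psi_exponent K j = (if K \<le> j then triangular (j - K) else triangular (K - j + 1))"

lemma gauss_psi_exponent:
  assumes "j \<le> 2 * K + 1"
  shows "triangular j + K * (2 * K + 1 - j) = triangular K + K + K * K + psi_exponent K j"
proof -
  have "int (2 * K + 1 - j) = 2 * int K + 1 - int j"
    using assms by simp
  then have lhs: "2 * int (triangular j + K * (2 * K + 1 - j))
      = 2 * int (triangular j) + 2 * int K * (2 * int K + 1 - int j)"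
    by (simp only: of_nat_add of_nat_mult) (simp add: algebra_simps)
  have rhs: "2 * int (triangular K + K + K * K + psi_exponent K j)
      = 2 * int (triangular K) + 2 * int K + 2 * int K * int K + 2 * int (psi_exponent K j)"
    by (simp add: algebra_simps)
  have "2 * int (triangular j + K * (2 * K + 1 - j)) = 2 * int (triangular K + K + K * K + psi_exponent K j)"
  proof (cases "K \<le> j")
    case True
    then have "2 * int (psi_exponent K j) = (int j - int K) * (int j - int K) - (int j - int K)"
      by (simp add: psi_exponent_def triangular_double_int of_nat_diff)
    then show ?thesis
      unfolding lhs rhs triangular_double_int by (simp add: algebra_simps)
  next
    case False
    then have "2 * int (psi_exponent K j) = (int K - int j + 1) * (int K - int j + 1) - (int K - int j + 1)"
      by (simp add: psi_exponent_def triangular_double_int of_nat_diff algebra_simps)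
    then show ?thesis
      unfolding lhs rhs triangular_double_int by (simp add: algebra_simps)
  qed
  then show ?thesis
    by (simp only: mult_cancel_left of_nat_eq_iff) simp
qed

lemma gauss_psi_finite:
  "2 * qpoch_neg (fps_X :: int fps) K ^ 2
    = (\<Sum>j\<le>2 * K + 1. qbinom (fps_X ^ 1) (2 * K + 1) j * fps_X ^ psi_exponent K j)"
proof -
  define E where "E = triangular K + K + K * K"
  have "fps_X ^ E * (2 * qpoch_neg (fps_X :: int fps) K ^ 2)
      = (\<Sum>j\<le>2 * K + 1. qbinom (fps_X ^ 1) (2 * K + 1) j * (fps_X ^ 1) ^ triangular j * 1 ^ j
          * (fps_X ^ K) ^ (2 * K + 1 - j))"
    unfolding E_def gauss_psi_finite_prod[symmetric] power_one_right by (rule qbinomial_theorem)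
  also have "\<dots> = fps_X ^ E * (\<Sum>j\<le>2 * K + 1. qbinom (fps_X ^ 1) (2 * K + 1) j * fps_X ^ psi_exponent K j)"
    unfolding sum_distrib_left
  proof (rule sum.cong)
    fix j assume "j \<in> {..2 * K + 1}"
    then have "(fps_X ^ 1) ^ triangular j * (fps_X ^ K) ^ (2 * K + 1 - j) = fps_X ^ E * (fps_X :: int fps) ^ psi_exponent K j"
      unfolding E_def power_one_right power_mult[symmetric] power_add[symmetric]
      using gauss_psi_exponent by simp
    then show "qbinom (fps_X ^ 1) (2 * K + 1) j * (fps_X ^ 1) ^ triangular j * 1 ^ j * (fps_X ^ K) ^ (2 * K + 1 - j)
        = fps_X ^ E * (qbinom (fps_X ^ 1 :: int fps) (2 * K + 1) j * fps_X ^ psi_exponent K j)"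
      by (simp only: power_one mult_1_right mult.assoc) (simp only: mult_ac)
  qed simp
  finally show ?thesis
    by simp
qed

lemma sum_atMost_odd_pair: "(\<Sum>j\<le>2 * K + 1. g j) = (\<Sum>i<Suc K. g (K - i) + g (K + Suc i))"
proof -
  have "{..2 * K + 1} = {..<Suc K + Suc K}"
    by auto
  then have "(\<Sum>j\<le>2 * K + 1. g j) = (\<Sum>j<Suc K. g j) + (\<Sum>i<Suc K. g (Suc K + i))"
    by (simp only: sum.lessThan_add_split)
  also have "(\<Sum>j<Suc K. g j) = (\<Sum>i<Suc K. g (Suc K - Suc i))"
    by (rule sum.nat_diff_reindex[symmetric])
  finally show ?thesis
    by (simp add: sum.distrib)
qed

lemma lacunary_sum_psi_pairing:
  "(\<Sum>j\<le>2 * K + 1. (fps_X :: int fps) ^ psi_exponent K j)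
    = 2 * lacunary_sum (\<lambda>_. 1) (\<lambda>k. triangular (Suc k)) (Suc K)"
  unfolding sum_atMost_odd_pair lacunary_sum_def sum_distrib_left
proof (rule sum.cong)
  fix i assume "i \<in> {..<Suc K}"
  then have "psi_exponent K (K - i) = triangular (Suc i)"
    by (cases i) (auto simp: psi_exponent_def)
  moreover have "psi_exponent K (K + Suc i) = triangular (Suc i)"
    by (simp add: psi_exponent_def)
  ultimately show "fps_X ^ psi_exponent K (K - i) + fps_X ^ psi_exponent K (K + Suc i)
      = 2 * (fps_const 1 * (fps_X :: int fps) ^ triangular (Suc i))"
    by (simp only: fps_const_1_eq_1 mult_1_left mult_2)
qed simp

lemma psi_exponent_less:
  assumes "psi_exponent K j < n"
  shows "K < j + n \<and> j \<le> K + n"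
proof (cases "K \<le> j")
  case True
  then show ?thesis
    using assms le_triangular_Suc_Suc[of "j - K"] by (simp add: psi_exponent_def)
next
  case False
  then show ?thesis
    using assms le_triangular_Suc[of "K - j"] by (simp add: psi_exponent_def)
qed

lemma psi_cutoff_qpoch_neg:
  assumes "K = 2 * n + 1"
  shows "fps_cutoff n (2 * psi) = fps_cutoff n (2 * qpoch_neg fps_X K ^ 2 * eta_f 1)"
proof -
  have "fps_cutoff n (2 * psi) = fps_cutoff n (2 * lacunary_sum (\<lambda>_. 1) (\<lambda>k. triangular (Suc k)) (Suc K))"
    by (rule fps_cutoff_mult_cong[OF refl psi_cutoff]) (simp add: assms)
  also have "\<dots> = fps_cutoff n (\<Sum>j\<le>2 * K + 1. 1 * (fps_X :: int fps) ^ psi_exponent K j)"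
    by (simp only: lacunary_sum_psi_pairing mult_1_left)
  also have "\<dots> = fps_cutoff n ((\<Sum>j\<le>2 * K + 1. 1 * qbinom (fps_X ^ 1) (2 * K + 1) j * fps_X ^ psi_exponent K j)
      * eta_f 1)"
    by (rule qbinom_sum_mult_eta_f_cutoff[where c = "\<lambda>_. 1", symmetric]) (auto dest: psi_exponent_less simp: assms)
  also have "\<dots> = fps_cutoff n (2 * qpoch_neg fps_X K ^ 2 * eta_f 1)"
    by (simp only: mult_1_left gauss_psi_finite)
  finally show ?thesis .
qed

lemma gauss_psi: "psi * eta_f 1 = eta_f 2 ^ 2"
proof -
  have "fps_cutoff n (2 * psi * eta_f 1) = fps_cutoff n (2 * eta_f 2 ^ 2)" for n
  proof -
    define K where "K = 2 * n + 1"
    have "fps_cutoff n (2 * psi * eta_f 1) = fps_cutoff n (2 * qpoch_neg fps_X K ^ 2 * eta_f 1 * eta_f 1)"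
      using psi_cutoff_qpoch_neg[OF K_def] by (rule fps_cutoff_mult_cong[OF _ refl])
    also have "\<dots> = fps_cutoff n (2 * qpoch_neg fps_X K ^ 2 * qpoch (fps_X ^ 1) K * qpoch (fps_X ^ 1) K)"
      by (intro fps_cutoff_mult_cong[OF fps_cutoff_mult_cong[OF refl eta_f_cutoff] eta_f_cutoff]) (simp_all add: K_def)
    also have "\<dots> = fps_cutoff n (2 * (qpoch_neg fps_X K * qpoch fps_X K) ^ 2)"
      by (simp only: power_one_right power2_eq_square mult_ac)
    also have "\<dots> = fps_cutoff n (2 * qpoch (fps_X ^ 2) K ^ 2)"
      by (simp only: qpoch_neg_mult)
    also have "\<dots> = fps_cutoff n (2 * eta_f 2 ^ 2)"
      by (intro fps_cutoff_mult_cong[OF refl] fps_cutoff_power_cong eta_f_cutoff[symmetric]) (simp_all add: K_def)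
    finally show ?thesis .
  qed
  then have "2 * (psi * eta_f 1) = 2 * eta_f 2 ^ 2"
    by (simp only: mult.assoc[symmetric] fps_eq_if_cutoffs_eq)
  then show ?thesis
    by (simp add: numeral_fps_const)
qed

section \<open>Jacobi's identity\<close>

lemma gauss_phi: "phi * eta_f 2 = (eta_f 1 oo - fps_X) ^ 2"
  using arg_cong[OF gauss_phi_uminus, of "\<lambda>f. f oo - fps_X"]
  by (simp add: fps_compose_ring_simps fps_compose_uminus_X_twice eta_f_compose_uminus_X)

lemma phi_eta_quotient: "phi * eta_f 1 ^ 2 * eta_f 4 ^ 2 = eta_f 2 ^ 5"
proof -
  have "eta_f 2 * (phi * eta_f 1 ^ 2 * eta_f 4 ^ 2) = ((eta_f 1 oo - fps_X) * eta_f 1 * eta_f 4) ^ 2"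
    by (simp only: power_mult_distrib gauss_phi[symmetric] mult_ac)
  also have "\<dots> = eta_f 2 * eta_f 2 ^ 5"
    by (simp only: eta_f_1_uminus_X_mult flip: power_mult power_Suc) simp
  finally show ?thesis
    by (simp add: eta_f_nonzero)
qed

lemma gauss_phi_uminus_X2: "((phi oo - fps_X) oo fps_X ^ 2) * eta_f 4 = eta_f 2 ^ 2"
  using arg_cong[OF gauss_phi_uminus, of "\<lambda>f. f oo fps_X ^ 2"]
  by (simp add: fps_compose_ring_simps eta_f_compose_X_power)

lemma gauss_psi_X2: "(psi oo fps_X ^ 2) * eta_f 2 = eta_f 4 ^ 2"
  using arg_cong[OF gauss_psi, of "\<lambda>f. f oo fps_X ^ 2"]
  by (simp add: fps_compose_ring_simps eta_f_compose_X_power)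

lemma phi_mult_phi_uminus: "phi * (phi oo - fps_X) = ((phi oo - fps_X) oo fps_X ^ 2) ^ 2"
proof -
  have "eta_f 4 ^ 2 * eta_f 2 * eta_f 1 ^ 2 * (phi * (phi oo - fps_X))
      = ((phi oo - fps_X) * eta_f 2) * (phi * eta_f 1 ^ 2 * eta_f 4 ^ 2)"
    by (simp only: mult_ac)
  also have "\<dots> = eta_f 2 * eta_f 1 ^ 2 * (((phi oo - fps_X) oo fps_X ^ 2) * eta_f 4) ^ 2"
    by (simp only: gauss_phi_uminus phi_eta_quotient gauss_phi_uminus_X2) algebra
  also have "\<dots> = eta_f 4 ^ 2 * eta_f 2 * eta_f 1 ^ 2 * ((phi oo - fps_X) oo fps_X ^ 2) ^ 2"
    by (simp only: power_mult_distrib mult_ac)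
  finally show ?thesis
    by (simp add: eta_f_nonzero)
qed

lemma phi_mult_psi_X2: "phi * (psi oo fps_X ^ 2) = psi ^ 2"
proof -
  have "eta_f 1 ^ 2 * eta_f 4 ^ 2 * eta_f 2 * (phi * (psi oo fps_X ^ 2))
      = (phi * eta_f 1 ^ 2 * eta_f 4 ^ 2) * ((psi oo fps_X ^ 2) * eta_f 2)"
    by (simp only: mult_ac)
  also have "\<dots> = eta_f 4 ^ 2 * eta_f 2 * (psi * eta_f 1) ^ 2"
    by (simp only: phi_eta_quotient gauss_psi_X2 gauss_psi) algebra
  also have "\<dots> = eta_f 1 ^ 2 * eta_f 4 ^ 2 * eta_f 2 * psi ^ 2"
    by (simp only: power_mult_distrib mult_ac)
  finally show ?thesis
    by (simp add: eta_f_nonzero)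
qed

lemma phi_square_diff: "phi ^ 2 - (phi oo - fps_X) ^ 2 = 8 * fps_X * (psi oo fps_X ^ 4) ^ 2"
proof -
  have "(phi oo fps_X ^ 4) * (psi oo fps_X ^ 8) = (psi oo fps_X ^ 4) ^ 2"
    using arg_cong[OF phi_mult_psi_X2, of "\<lambda>f. f oo fps_X ^ 4"]
    by (simp add: fps_compose_ring_simps fps_compose_X_power_compose)
  then show ?thesis
    using phi_split phi_uminus_split by algebra
qed

lemma jacobi_phi_fourth_power: "phi ^ 4 - (phi oo - fps_X) ^ 4 = 16 * fps_X * (psi oo fps_X ^ 2) ^ 4"
proof -
  have "(phi oo fps_X ^ 2) ^ 2 - ((phi oo - fps_X) oo fps_X ^ 2) ^ 2 = 8 * fps_X ^ 2 * (psi oo fps_X ^ 8) ^ 2"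
    using arg_cong[OF phi_square_diff, of "\<lambda>f. f oo fps_X ^ 2"]
    by (simp add: fps_compose_ring_simps fps_compose_X_power_compose)
  then have "phi ^ 2 + (phi oo - fps_X) ^ 2 = 2 * (phi oo fps_X ^ 2) ^ 2"
    using phi_split phi_uminus_split phi_mult_phi_uminus by algebra
  moreover have "(phi oo fps_X ^ 2) * (psi oo fps_X ^ 4) = (psi oo fps_X ^ 2) ^ 2"
    using arg_cong[OF phi_mult_psi_X2, of "\<lambda>f. f oo fps_X ^ 2"]
    by (simp add: fps_compose_ring_simps fps_compose_X_power_compose)
  ultimately show ?thesis
    using phi_square_diff by algebra
qed

lemma eta_f_1_power_8_uminus_X_diff: "(eta_f 1 oo - fps_X) ^ 8 - eta_f 1 ^ 8 = 16 * fps_X * eta_f 4 ^ 8"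
proof -
  have "(eta_f 1 oo - fps_X) ^ 8 - eta_f 1 ^ 8 = eta_f 2 ^ 4 * (phi ^ 4 - (phi oo - fps_X) ^ 4)"
    using gauss_phi gauss_phi_uminus by algebra
  also have "\<dots> = 16 * fps_X * ((psi oo fps_X ^ 2) * eta_f 2) ^ 4"
    by (simp only: jacobi_phi_fourth_power power_mult_distrib mult_ac)
  also have "\<dots> = 16 * fps_X * eta_f 4 ^ 8"
    by (simp only: gauss_psi_X2 flip: power_mult) simp
  finally show ?thesis .
qed

lemma eta_f_1_power_8_nth: "(eta_f 1 ^ 8) $ (4 * n + 1) = - 8 * (eta_f 1 ^ 8) $ n"
proof -
  define F where "F = eta_f 1 ^ 8"
  have "F oo - fps_X = (eta_f 1 oo - fps_X) ^ 8" "F oo fps_X ^ 4 = eta_f 4 ^ 8"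
    by (simp_all add: F_def fps_compose_power[symmetric] eta_f_compose_X_power)
  then have "(F oo - fps_X) - F = 16 * (fps_X * (F oo fps_X ^ 4))"
    using eta_f_1_power_8_uminus_X_diff by (simp add: F_def mult.assoc)
  then have "((F oo - fps_X) - F) $ (4 * n + 1) = 16 * (F oo fps_X ^ 4) $ (4 * n)"
    by (simp add: numeral_fps_const fps_X_mult_nth)
  then have "- 2 * F $ (4 * n + 1) = 16 * F $ n"
    by (simp add: fps_compose_uminus' fps_compose_X_power_nth)
  then show ?thesis
    by (simp add: F_def)
qed

section \<open>Congruences\<close>

lemma dvd_diff_mult_cong:
  fixes p :: "'a::comm_ring_1"
  assumes "p dvd x - x'" "p dvd y - y'"
  shows "p dvd x * y - x' * y'"
proof -
  have "x * y - x' * y' = (x - x') * y + x' * (y - y')"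
    by (simp add: algebra_simps)
  then show ?thesis
    using assms by simp
qed

lemma dvd_diff_power_cong:
  fixes p :: "'a::comm_ring_1"
  shows "p dvd x - x' \<Longrightarrow> p dvd x ^ k - x' ^ k"
  by (induction k) (simp_all add: dvd_diff_mult_cong)

lemma five_dvd_one_minus_power_5:
  fixes y :: "'a::comm_ring_1"
  shows "5 dvd (1 - y) ^ 5 - (1 - y ^ 5)"
proof -
  have "(1 - y) ^ 5 - (1 - y ^ 5) = 5 * (y ^ 4 - 2 * y ^ 3 + 2 * y ^ 2 - y)"
    by (simp add: eval_nat_numeral algebra_simps)
  then show ?thesis
    by (simp only: dvd_triv_left)
qed

lemma five_dvd_qpoch_power_5:
  fixes Q :: "'a::comm_ring_1"
  shows "5 dvd qpoch Q m ^ 5 - qpoch (Q ^ 5) m"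
proof (induction m)
  case (Suc m)
  have "(Q ^ 5) ^ Suc m = (Q ^ Suc m) ^ 5"
    by (simp only: power_mult[symmetric] mult.commute)
  then show ?case
    using dvd_diff_mult_cong[OF Suc.IH five_dvd_one_minus_power_5[of "Q ^ Suc m"]]
    by (simp add: qpoch_Suc power_mult_distrib)
qed simp

lemma fps_const_dvd_iff:
  fixes c :: "'a::comm_ring_1"
  shows "fps_const c dvd f \<longleftrightarrow> (\<forall>n. c dvd f $ n)"
proof
  assume "\<forall>n. c dvd f $ n"
  then have "f $ n = c * (SOME d. f $ n = c * d)" for n
    unfolding dvd_def by (intro someI_ex[of "\<lambda>d. f $ n = c * d"]) blast
  then have "f = fps_const c * Abs_fps (\<lambda>n. SOME d. f $ n = c * d)"
    by (simp add: fps_eq_iff)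
  then show "fps_const c dvd f" ..
qed (auto elim!: dvdE)

lemma five_dvd_eta_f_power_5:
  assumes "0 < r"
  shows "5 dvd eta_f r ^ 5 - eta_f (5 * r)"
proof -
  have "5 dvd (eta_f r ^ 5 - eta_f (5 * r)) $ n" for n
  proof -
    have "(eta_f r ^ 5) $ n = (qpoch (fps_X ^ r) n ^ 5) $ n"
      using assms by (intro fps_nth_eq_if_cutoff_Suc_eq fps_cutoff_power_cong eta_f_cutoff) auto
    moreover have "eta_f (5 * r) $ n = qpoch ((fps_X ^ r) ^ 5) n $ n"
    proof -
      have "(fps_X ^ r) ^ 5 = (fps_X :: int fps) ^ (5 * r)"
        by (simp only: power_mult[symmetric] mult.commute)
      then show ?thesis
        using assms by (simp only:) (intro fps_nth_eq_if_cutoff_Suc_eq eta_f_cutoff, simp_all)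
    qed
    moreover have "(5 :: int) dvd (qpoch (fps_X ^ r) n ^ 5 - qpoch ((fps_X ^ r) ^ 5) n) $ n"
      using five_dvd_qpoch_power_5[of "fps_X ^ r :: int fps" n] by (simp add: numeral_fps_const fps_const_dvd_iff)
    ultimately show ?thesis
      by simp
  qed
  then show ?thesis
    by (simp add: numeral_fps_const fps_const_dvd_iff)
qed

lemma fps_right_inverse_power:
  fixes f :: "'a::comm_ring_1 fps"
  assumes "f $ 0 = 1"
  shows "fps_right_inverse (f ^ k) 1 = fps_right_inverse f 1 ^ k"
proof -
  have "f * fps_right_inverse f 1 = 1"
    by (rule fps_right_inverse) (simp add: assms)
  then have inv: "f ^ k * fps_right_inverse f 1 ^ k = 1"
    by (simp flip: power_mult_distrib)
  have inv_power: "f ^ k * fps_right_inverse (f ^ k) 1 = 1"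
    by (rule fps_right_inverse) (simp add: assms fps_nth_power_0)
  have "fps_right_inverse (f ^ k) 1 = (f ^ k * fps_right_inverse f 1 ^ k) * fps_right_inverse (f ^ k) 1"
    by (simp only: inv mult_1_left)
  also have "\<dots> = fps_right_inverse f 1 ^ k * (f ^ k * fps_right_inverse (f ^ k) 1)"
    by (simp only: mult_ac)
  also have "\<dots> = fps_right_inverse f 1 ^ k"
    by (simp only: inv_power mult_1_right)
  finally show ?thesis .
qed

lemma b_gen_eq_power:
  assumes "0 < l" "0 < m"
  shows "b_gen k l m = b_gen 1 l m ^ k"
proof -
  have "(eta_f 1 * eta_f (l * m)) $ 0 = 1"
    using assms by (simp add: eta_f_nth_0)
  then show ?thesis
    unfolding b_gen_def by (simp add: fps_right_inverse_power power_mult_distrib flip: power_mult_distrib)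
qed

lemma fps_right_inverse_compose_mult:
  fixes f h :: "'a::idom fps"
  assumes "f $ 0 = 1" "h $ 0 = 0"
  shows "(fps_right_inverse f 1 oo h) * (f oo h) = 1"
proof -
  have "(f * fps_right_inverse f 1) oo h = 1"
    using assms by (simp add: fps_right_inverse)
  then show ?thesis
    using assms by (simp only: fps_compose_mult_distrib mult.commute)
qed

lemma five_dvd_eta_f_square_diff:
  assumes "0 < r"
  shows "5 dvd eta_f (r * 5) ^ 2 - eta_f r ^ 10"
proof -
  have "5 dvd eta_f (r * 5) - eta_f r ^ 5"
    using five_dvd_eta_f_power_5[OF assms] by (metis dvd_minus_iff minus_diff_eq mult.commute)
  then have "5 dvd eta_f (r * 5) ^ 2 - (eta_f r ^ 5) ^ 2"
    by (rule dvd_diff_power_cong)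
  then show ?thesis
    by (simp flip: power_mult)
qed

lemma b_gen_2_5_mod_5:
  assumes "0 < l"
  shows "5 dvd b_gen 2 l 5 - eta_f 1 ^ 8 * (fps_right_inverse (eta_f 1 ^ 8) 1 oo fps_X ^ l)"
proof -
  define B where "B = b_gen 2 l 5"
  define C where "C = eta_f 1 ^ 8 * (fps_right_inverse (eta_f 1 ^ 8) 1 oo fps_X ^ l)"
  define D where "D = eta_f 1 ^ 2 * eta_f (l * 5) ^ 2"
  define D' where "D' = eta_f 1 ^ 2 * eta_f l ^ 10"
  define N where "N = eta_f l ^ 2 * eta_f 5 ^ 2"
  define N' where "N' = eta_f l ^ 2 * eta_f 1 ^ 10"
  have "D $ 0 = 1" "D' $ 0 = 1" "(eta_f 1 ^ 8) $ 0 = 1"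
    using assms by (simp_all add: D_def D'_def eta_f_nth_0 fps_nth_power_0)
  then have D_inv: "D * fps_right_inverse D 1 = 1" and D'_inv: "D' * fps_right_inverse D' 1 = 1"
    and F_inv: "(fps_right_inverse (eta_f 1 ^ 8) 1 oo fps_X ^ l) * (eta_f 1 ^ 8 oo fps_X ^ l) = 1"
    using assms by (simp_all add: fps_right_inverse fps_right_inverse_compose_mult)
  have "B = N * fps_right_inverse D 1"
    by (simp add: B_def N_def D_def b_gen_def)
  then have "B * D = N * (D * fps_right_inverse D 1)"
    by (simp only: mult_ac)
  then have BD: "B * D = N"
    by (simp only: D_inv mult_1_right)
  have "eta_f 1 ^ 8 oo fps_X ^ l = eta_f l ^ 8"
    using assms by (simp add: fps_compose_power[symmetric] eta_f_compose_X_power)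
  moreover have "eta_f l ^ 10 = eta_f l ^ 2 * eta_f l ^ 8" "eta_f 1 ^ 10 = eta_f 1 ^ 2 * eta_f 1 ^ 8"
    by (simp_all flip: power_add)
  ultimately have "C * D' = N' * ((fps_right_inverse (eta_f 1 ^ 8) 1 oo fps_X ^ l) * (eta_f 1 ^ 8 oo fps_X ^ l))"
    by (simp only: C_def D'_def N'_def mult_ac)
  then have CD': "C * D' = N'"
    by (simp only: F_inv mult_1_right)
  have "5 dvd D - D'"
    unfolding D_def D'_def by (rule dvd_diff_mult_cong) (use five_dvd_eta_f_square_diff[of l] assms in simp_all)
  moreover have "5 dvd N - N'"
    unfolding N_def N'_def by (rule dvd_diff_mult_cong) (use five_dvd_eta_f_square_diff[of 1] in simp_all)
  moreover have "(B - C) * D' = (N - N') - B * (D - D')"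
    using BD CD' by (simp add: algebra_simps)
  ultimately have "5 dvd (B - C) * D' * fps_right_inverse D' 1"
    by simp
  then show ?thesis
    by (simp add: B_def C_def D'_inv mult.assoc)
qed

lemma fps_square_nth_odd:
  fixes A :: "'a::comm_semiring_1 fps"
  shows "(A * A) $ (2 * k + 1) = 2 * (\<Sum>i<Suc k. A $ i * A $ (2 * k + 1 - i))"
proof -
  define g where "g i = A $ i * A $ (2 * k + 1 - i)" for i
  have "(A * A) $ (2 * k + 1) = (\<Sum>i<Suc k + Suc k. g i)"
    unfolding fps_mult_nth g_def by (rule sum.cong) auto
  also have "\<dots> = (\<Sum>i<Suc k. g i) + (\<Sum>i<Suc k. g (Suc k + i))"
    by (rule sum.lessThan_add_split)
  also have "(\<Sum>i<Suc k. g (Suc k + i)) = (\<Sum>i<Suc k. g (Suc k + (Suc k - Suc i)))"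
    by (rule sum.nat_diff_reindex[symmetric])
  also have "(\<Sum>i<Suc k. g (Suc k + (Suc k - Suc i))) = (\<Sum>i<Suc k. g i)"
  proof (rule sum.cong)
    fix i assume "i \<in> {..<Suc k}"
    then have "Suc k + (Suc k - Suc i) = 2 * k + 1 - i" "2 * k + 1 - (2 * k + 1 - i) = i"
      by auto
    then show "g (Suc k + (Suc k - Suc i)) = g i"
      by (simp only: g_def mult.commute)
  qed simp
  finally show ?thesis
    by (simp only: g_def mult_2)
qed

lemma mult_compose_X_power_8_nth:
  fixes F W :: "'a::comm_ring_1 fps"
  assumes "\<And>n. F $ (4 * n + 1) = c * F $ n"
  shows "(F * (W oo fps_X ^ 8)) $ (4 * n + 1) = c * (F * (W oo fps_X ^ 2)) $ n"
proof -
  have "(4 * n + 1) div 8 = n div 2"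
    by presburger
  then have "(F * (W oo fps_X ^ 8)) $ (4 * n + 1) = (\<Sum>j\<le>n div 2. F $ (4 * n + 1 - 8 * j) * W $ j)"
    by (subst fps_mult_compose_X_power_nth) simp_all
  also have "\<dots> = (\<Sum>j\<le>n div 2. c * (F $ (n - 2 * j) * W $ j))"
  proof (rule sum.cong)
    fix j assume "j \<in> {..n div 2}"
    then have "4 * n + 1 - 8 * j = 4 * (n - 2 * j) + 1"
      by auto
    then show "F $ (4 * n + 1 - 8 * j) * W $ j = c * (F $ (n - 2 * j) * W $ j)"
      by (simp only: assms mult.assoc)
  qed simp
  also have "\<dots> = c * (F * (W oo fps_X ^ 2)) $ n"
    by (simp add: fps_mult_compose_X_power_nth sum_distrib_left)
  finally show ?thesis .
qed

theorem mainTheorem16: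
  fixes n :: nat
  assumes "n \<ge> 1"
  shows "[b 2 8 5 (4 * n + 1) = 2 * b 2 2 5 n] (mod 10)"
proof -
  define F where "F = eta_f 1 ^ 8"
  define W where "W = fps_right_inverse F 1"
  have "5 dvd b 2 8 5 (4 * n + 1) - (F * (W oo fps_X ^ 8)) $ (4 * n + 1)"
    using b_gen_2_5_mod_5[of 8] by (simp add: b_def F_def W_def numeral_fps_const fps_const_dvd_iff)
  moreover have "5 dvd b 2 2 5 n - (F * (W oo fps_X ^ 2)) $ n"
    using b_gen_2_5_mod_5[of 2] by (simp add: b_def F_def W_def numeral_fps_const fps_const_dvd_iff)
  moreover have "(F * (W oo fps_X ^ 8)) $ (4 * n + 1) = - 8 * (F * (W oo fps_X ^ 2)) $ n"
    unfolding F_def by (rule mult_compose_X_power_8_nth) (rule eta_f_1_power_8_nth)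
  moreover have "even (b 2 8 5 (4 * n + 1))"
    using fps_square_nth_odd[of "b_gen 1 8 5" "2 * n"]
    by (simp add: b_def b_gen_eq_power[of 8 5 2] power2_eq_square)
  ultimately have "10 dvd b 2 8 5 (4 * n + 1) - 2 * b 2 2 5 n"
    by presburger
  then show ?thesis
    by (simp add: cong_iff_dvd_diff)
qed

end
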